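(* Let $(X,\tau,\mathcal{I})$ be an ideal topological space such that $(X,\tau)$ is semi-Alexandroff, $(X,\tau,\mathcal{I})$ is a $T_{\mathcal{I}}$-space, and $\mathcal{I}$ is a $\tau$-boundary. Then $\mathcal{I}$ is completely codense.
   Context: An ideal on a topological space $(X,\tau)$ is a nonempty collection $\mathcal{I}$ of subsets of $X$ closed under taking subsets and finite unions; $(X,\tau,\mathcal{I})$ is then called an ideal topological space. $(X,\tau,\mathcal{I})$ is a $T_{\mathcal{I}}$-space if for every $I\in\mathcal{I}$ and every $x\in X\setminus I$ there is a set $A_x\subseteq X$ with $x\in A_x$, $A_x\cap I=\emptyset$, and $A_x$ either open or closed. A set is semi-open if it lies between an open set and the closure of that open set. $(X,\tau)$ is semi-Alexandroff if every intersection of open sets is semi-open. $\mathcal{I}$ is a $\tau$-boundary if $\tau\cap\mathcal{I}=\{\emptyset\}$. A set $A$ is preopen if $A\subseteq \mathrm{Int}\,\overline{A}$; $\mathcal{I}$ is completely codense if the only preopen set belonging to $\mathcal{I}$ is $\emptyset$ (equivalently, every member of $\mathcal{I}$ is nowhere dense). *)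

theory Defs
  imports "HOL-Analysis.Analysis"
begin

definition is_ideal_on :: "'a topology \<Rightarrow> 'a set set \<Rightarrow> bool" where
  "is_ideal_on T \<I> \<longleftrightarrow> \<I> \<noteq> {} \<and> (\<forall>A\<in>\<I>. A \<subseteq> topspace T) \<and>
     (\<forall>A B. A \<in> \<I> \<and> B \<subseteq> A \<longrightarrow> B \<in> \<I>) \<and>
     (\<forall>A B. A \<in> \<I> \<and> B \<in> \<I> \<longrightarrow> A \<union> B \<in> \<I>)"

definition semi_open_in :: "'a topology \<Rightarrow> 'a set \<Rightarrow> bool" where
  "semi_open_in T A \<longleftrightarrow> (\<exists>U. openin T U \<and> U \<subseteq> A \<and> A \<subseteq> T closure_of U)"

text \<open>Every intersection of open sets (the empty intersection being the whole space) is semi-open.\<close>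
definition semi_Alexandroff :: "'a topology \<Rightarrow> bool" where
  "semi_Alexandroff T \<longleftrightarrow>
     (\<forall>\<F>. (\<forall>U\<in>\<F>. openin T U) \<longrightarrow> semi_open_in T (topspace T \<inter> \<Inter>\<F>))"

definition T_I_space :: "'a topology \<Rightarrow> 'a set set \<Rightarrow> bool" where
  "T_I_space T \<I> \<longleftrightarrow>
     (\<forall>I\<in>\<I>. \<forall>x \<in> topspace T - I. \<exists>A. A \<subseteq> topspace T \<and> x \<in> A \<and> A \<inter> I = {} \<and>
        (openin T A \<or> closedin T A))"

definition tau_boundary :: "'a topology \<Rightarrow> 'a set set \<Rightarrow> bool" where
  "tau_boundary T \<I> \<longleftrightarrow> {U. openin T U} \<inter> \<I> = {{}}"

definition preopen_in :: "'a topology \<Rightarrow> 'a set \<Rightarrow> bool" where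
  "preopen_in T A \<longleftrightarrow> A \<subseteq> topspace T \<and> A \<subseteq> T interior_of (T closure_of A)"

definition completely_codense :: "'a topology \<Rightarrow> 'a set set \<Rightarrow> bool" where
  "completely_codense T \<I> \<longleftrightarrow> {A. preopen_in T A} \<inter> \<I> = {{}}"

end

theory Submission
  imports Defs
begin

(* A preopen member I of the ideal is an intersection of open sets: a point of
   int cl I outside I cannot be separated from I by an open set, since it lies in
   the closure of I, so the T_I axiom separates it by a closed set whose complement
   is an open superset of I. By semi-Alexandroffness I is then semi-open, i.e. it
   contains an open W with I contained in cl W. W lies in the ideal and is open,
   hence empty by the boundary condition, and so I is empty. *)

lemma ideal_preopen_eq_Inter_open:
  assumes "T_I_space T \<I>" and "I \<in> \<I>" and "preopen_in T I"
  obtains \<F> where "\<forall>V\<in>\<F>. openin T V" and "topspace T \<inter> \<Inter>\<F> = I"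
proof -
  define U where "U = T interior_of (T closure_of I)"
  define \<F> where "\<F> = insert U {V. openin T V \<and> I \<subseteq> V}"
  have "\<forall>V\<in>\<F>. openin T V"
    unfolding \<F>_def U_def by simp
  have "I \<subseteq> topspace T" "I \<subseteq> U"
    using assms(3) unfolding preopen_in_def U_def by auto
  then have "I \<subseteq> topspace T \<inter> \<Inter>\<F>"
    unfolding \<F>_def by blast
  moreover have "x \<in> I" if x: "x \<in> topspace T \<inter> \<Inter>\<F>" for x
  proof (rule ccontr)
    assume "x \<notin> I"
    with x have "x \<in> topspace T - I"
      by blast
    with assms(1,2) obtain A where A: "x \<in> A" "A \<inter> I = {}" "openin T A \<or> closedin T A"
      unfolding T_I_space_def by blast
    have "x \<in> U"
      using x unfolding \<F>_def by blast
    then have "x \<in> T closure_of I"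
      unfolding U_def by (rule subsetD[OF interior_of_subset])
    then have "\<not> openin T A"
      using A(1,2) by (auto simp: in_closure_of)
    then have "openin T (topspace T - A)"
      using A(3) by (simp add: openin_diff)
    with \<open>I \<subseteq> topspace T\<close> A(2) have "topspace T - A \<in> \<F>"
      unfolding \<F>_def by blast
    with x A(1) show False
      by blast
  qed
  ultimately have "topspace T \<inter> \<Inter>\<F> = I"
    by blast
  with \<open>\<forall>V\<in>\<F>. openin T V\<close> show thesis
    using that by blast
qed

lemma semi_open_in_tau_boundary_ideal_empty:
  assumes "is_ideal_on T \<I>" and "tau_boundary T \<I>"
    and "A \<in> \<I>" and "semi_open_in T A"
  shows "A = {}"
proof -
  obtain W where W: "openin T W" "W \<subseteq> A" "A \<subseteq> T closure_of W"
    using assms(4) unfolding semi_open_in_def by blast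
  have "W \<in> \<I>"
    using assms(1,3) W(2) unfolding is_ideal_on_def by blast
  with W(1) assms(2) have "W = {}"
    unfolding tau_boundary_def by blast
  with W(3) show "A = {}"
    by simp
qed

lemma empty_in_ideal:
  assumes "is_ideal_on T \<I>"
  shows "{} \<in> \<I>"
  using assms unfolding is_ideal_on_def by blast

theorem mainTheorem1:
  fixes T :: "'a topology" and \<I> :: "'a set set"
  assumes "is_ideal_on T \<I>"
    and "semi_Alexandroff T"
    and "T_I_space T \<I>"
    and "tau_boundary T \<I>"
  shows "completely_codense T \<I>"
proof -
  have "I = {}" if I: "I \<in> \<I>" and "preopen_in T I" for I
  proof -
    obtain \<F> where "\<forall>V\<in>\<F>. openin T V" and I_eq: "topspace T \<inter> \<Inter>\<F> = I"
      by (rule ideal_preopen_eq_Inter_open[OF assms(3) I \<open>preopen_in T I\<close>])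
    then have "semi_open_in T (topspace T \<inter> \<Inter>\<F>)"
      using assms(2) unfolding semi_Alexandroff_def by blast
    with I_eq have "semi_open_in T I"
      by simp
    then show "I = {}"
      by (rule semi_open_in_tau_boundary_ideal_empty[OF assms(1,4) I])
  qed
  moreover have "preopen_in T {}"
    unfolding preopen_in_def by simp
  ultimately show ?thesis
    using empty_in_ideal[OF assms(1)] unfolding completely_codense_def by blast
qed

end
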